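(* Let $G$ be a finite abelian group and $x,y\in G$ with $[x]_{\mathtt{N}}\neq\mathcal{S}$. Then $x\mathtt{N}y$ if and only if $\langle x\rangle=\langle y\rangle$.
   Context: The power graph $\mathcal{P}(G)$ has vertex set $G$, and distinct $x,y$ are adjacent iff one is a positive integer power of the other. $x\mathtt{N}y$ iff $x$ and $y$ have the same closed neighbourhood in $\mathcal{P}(G)$; $[x]_{\mathtt{N}}$ is the class of $x$. $\mathcal{S}=[1]_{\mathtt{N}}$ is the set of vertices adjacent to all others. *)

theory Defs
  imports "HOL-Algebra.Algebra"
begin

definition power_adj :: "('a, 'b) monoid_scheme \<Rightarrow> 'a \<Rightarrow> 'a \<Rightarrow> bool" where
  "power_adj G x y \<longleftrightarrow> x \<in> carrier G \<and> y \<in> carrier G \<and> x \<noteq> y \<and>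
     ((\<exists>n::nat. n > 0 \<and> y = x [^]\<^bsub>G\<^esub> n) \<or> (\<exists>n::nat. n > 0 \<and> x = y [^]\<^bsub>G\<^esub> n))"

definition closed_nbhd :: "('a, 'b) monoid_scheme \<Rightarrow> 'a \<Rightarrow> 'a set" where
  "closed_nbhd G x = insert x {y \<in> carrier G. power_adj G x y}"

definition relN :: "('a, 'b) monoid_scheme \<Rightarrow> 'a \<Rightarrow> 'a \<Rightarrow> bool" where
  "relN G x y \<longleftrightarrow> closed_nbhd G x = closed_nbhd G y"

definition classN :: "('a, 'b) monoid_scheme \<Rightarrow> 'a \<Rightarrow> 'a set" where
  "classN G x = {y \<in> carrier G. relN G x y}"

definition setS :: "('a, 'b) monoid_scheme \<Rightarrow> 'a set" where
  "setS G = classN G \<one>\<^bsub>G\<^esub>"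

end

theory Submission
  imports Defs
begin

text \<open>In a finite group \<open>\<langle>b\<rangle>\<close> is the set of powers of \<open>b\<close>, so the closed neighbourhood of \<open>a\<close>
consists of the \<open>b\<close> with \<open>b \<in> \<langle>a\<rangle>\<close> or \<open>a \<in> \<langle>b\<rangle>\<close>, and equal cyclic subgroups give equal
neighbourhoods. Conversely, let \<open>N[x] = N[y]\<close> with \<open>\<langle>y\<rangle> \<subset> \<langle>x\<rangle>\<close> and \<open>N[x] \<noteq> G\<close>, and write
\<open>n = ord x\<close>, \<open>d = ord y\<close>. Then \<open>y \<noteq> 1\<close>, and since every element of \<open>\<langle>x\<rangle>\<close> lies in \<open>N[y]\<close>,
every divisor of \<open>n\<close> is comparable with \<open>d\<close>; this forces \<open>n\<close> to be a power of a prime \<open>p\<close>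
with \<open>p d\<close> dividing \<open>n\<close>, so that \<open>y = x'\<^sup>p\<close> for some \<open>x' \<in> \<langle>x\<rangle>\<close>. We then find \<open>z\<close> with
\<open>y \<in> \<langle>z\<rangle>\<close> but \<open>z \<notin> N[x]\<close>: \<open>z = y u\<close> for an element \<open>u\<close> of prime order not dividing \<open>n\<close>, or
\<open>z = x' t\<close> for an element \<open>t\<close> of order \<open>p\<close> outside \<open>\<langle>x\<rangle>\<close>. If neither exists, \<open>G\<close> is a
\<open>p\<close>-group all of whose elements of order \<open>p\<close> lie in \<open>\<langle>x\<rangle>\<close>, and then \<open>N[x] = G\<close>.\<close>

lemma prime_divisor_unique_if_divisors_comparable:
  fixes n d p q :: nat
  assumes comparable: "\<And>e. e dvd n \<Longrightarrow> e dvd d \<or> d dvd e"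
    and "1 < d" and p: "Factorial_Ring.prime p" "p * d dvd n"
    and q: "Factorial_Ring.prime q" "q dvd n"
  shows "q = p"
proof -
  have "q dvd d"
  proof (rule ccontr)
    assume "\<not> q dvd d"
    then have "d dvd q"
      using comparable q by blast
    then show False
      using \<open>1 < d\<close> \<open>\<not> q dvd d\<close> q(1) by (auto simp: prime_nat_iff)
  qed
  then obtain d' where d': "d = q * d'"
    by blast
  have "d' * p dvd n"
    using p(2) d' by (metis dvd_mult_left mult.assoc mult.commute)
  then have "d' * p dvd q * d' \<or> q * d' dvd d' * p"
    using comparable d' by blast
  moreover have "d' \<noteq> 0"
    using d' \<open>1 < d\<close> by (metis mult_0_right not_less_zero)
  ultimately have "p dvd q \<or> q dvd p"
    by (auto simp: mult.commute)
  then show "q = p"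
    using p(1) q(1) primes_dvd_imp_eq by metis
qed

lemma coprime_if_unique_prime_divisor:
  fixes n k p :: nat
  assumes unique: "\<And>q. Factorial_Ring.prime q \<Longrightarrow> q dvd n \<Longrightarrow> q = p" and "\<not> p dvd k"
  shows "coprime k n"
proof (rule ccontr)
  assume "\<not> coprime k n"
  then obtain q where "Factorial_Ring.prime q" "q dvd gcd k n"
    using prime_factor_nat coprime_iff_gcd_eq_1 by metis
  then show False
    using unique \<open>\<not> p dvd k\<close> by auto
qed

locale finite_group = group +
  assumes finite_carrier: "finite (carrier G)"

locale finite_comm_group = finite_group + comm_group

context finite_group
begin

lemma ord_pos: "a \<in> carrier G \<Longrightarrow> 0 < ord a"
  using ord_ge_1[OF finite_carrier] by fastforce

lemma mem_generate_singleton_iff: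
  "a \<in> carrier G \<Longrightarrow> b \<in> generate G {a} \<longleftrightarrow> (\<exists>k::nat. b = a [^] k)"
  using generate_pow_on_finite_carrier[OF finite_carrier] by auto

lemma pow_mem_generate_singleton: "a \<in> carrier G \<Longrightarrow> a [^] (k::nat) \<in> generate G {a}"
  by (auto simp: mem_generate_singleton_iff)

lemma generate_singleton_subset_carrier: "a \<in> carrier G \<Longrightarrow> generate G {a} \<subseteq> carrier G"
  by (simp add: generate_incl)

lemma generate_singleton_mono:
  assumes "a \<in> carrier G" "b \<in> generate G {a}"
  shows "generate G {b} \<subseteq> generate G {a}"
  using assms by (simp add: generate_subgroup_incl generate_is_subgroup)

lemma card_generate_singleton: "a \<in> carrier G \<Longrightarrow> card (generate G {a}) = ord a"
  by (simp add: generate_pow_card)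

lemma generate_singleton_eq_if_ord_eq:
  assumes a: "a \<in> carrier G" and b: "b \<in> generate G {a}" and ord: "ord b = ord a"
  shows "generate G {b} = generate G {a}"
proof -
  have "b \<in> carrier G"
    using a b generate_singleton_subset_carrier by blast
  then have "card (generate G {b}) = card (generate G {a})"
    using a ord by (simp add: card_generate_singleton)
  then show ?thesis
    using a b generate_singleton_mono finite_carrier generate_singleton_subset_carrier
    by (meson card_subset_eq finite_subset)
qed

lemma generate_pow_eq_if_coprime:
  "a \<in> carrier G \<Longrightarrow> coprime k (ord a) \<Longrightarrow> generate G {a [^] (k::nat)} = generate G {a}"
  by (simp add: generate_singleton_eq_if_ord_eq pow_mem_generate_singleton
      pow_ord_eq_ord_iff[OF finite_carrier])

lemma ord_dvd_if_mem_generate: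
  assumes a: "a \<in> carrier G" and b: "b \<in> generate G {a}"
  shows "ord b dvd ord a"
proof -
  obtain k :: nat where k: "b = a [^] k"
    using a b by (auto simp: mem_generate_singleton_iff)
  then have "b [^] ord a = \<one>"
    using a by (metis mult.commute nat_pow_one nat_pow_pow pow_ord_eq_1)
  then show ?thesis
    using a b generate_singleton_subset_carrier pow_eq_id by blast
qed

lemma ord_pow_ord_div:
  assumes "a \<in> carrier G" "e dvd ord a"
  shows "ord (a [^] (ord a div e)) = e"
  using assms ord_pos[OF assms(1)] by (subst ord_pow) (auto elim!: dvdE)

lemma mem_generate_singleton_iff_pos:
  assumes a: "a \<in> carrier G"
  shows "b \<in> generate G {a} \<longleftrightarrow> (\<exists>k::nat. 0 < k \<and> b = a [^] k)"
proof
  assume "b \<in> generate G {a}"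
  then obtain k :: nat where "b = a [^] k"
    using a by (auto simp: mem_generate_singleton_iff)
  then have "b = a [^] (k + ord a)"
    using a by (simp add: nat_pow_mult[symmetric])
  then show "\<exists>k::nat. 0 < k \<and> b = a [^] k"
    using ord_pos[OF a] add_gr_0 by blast
qed (auto simp: a mem_generate_singleton_iff)

lemma power_adj_iff:
  "power_adj G a b \<longleftrightarrow> a \<in> carrier G \<and> b \<in> carrier G \<and> a \<noteq> b \<and>
    (b \<in> generate G {a} \<or> a \<in> generate G {b})"
  unfolding power_adj_def using mem_generate_singleton_iff_pos by blast

lemma mem_closed_nbhd_iff:
  assumes "a \<in> carrier G"
  shows "b \<in> closed_nbhd G a \<longleftrightarrow>
    b \<in> carrier G \<and> (b \<in> generate G {a} \<or> a \<in> generate G {b})"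
  using assms generate.incl[of a "{a}" G] by (auto simp: closed_nbhd_def power_adj_iff)

lemma closed_nbhd_one: "closed_nbhd G \<one> = carrier G"
  by (auto simp: mem_closed_nbhd_iff generate.one)

lemma ord_dvd_or_dvd_if_mem_closed_nbhd:
  assumes "a \<in> carrier G" "b \<in> closed_nbhd G a"
  shows "ord b dvd ord a \<or> ord a dvd ord b"
  using assms by (auto simp: mem_closed_nbhd_iff ord_dvd_if_mem_generate)

lemma closed_nbhd_eq_if_generate_eq:
  assumes "a \<in> carrier G" "b \<in> carrier G" "generate G {a} = generate G {b}"
  shows "closed_nbhd G a = closed_nbhd G b"
proof -
  have "a \<in> generate G {c} \<longleftrightarrow> b \<in> generate G {c}" if "c \<in> carrier G" for c
    using assms generate.incl[of _ "{_}" G] generate_singleton_mono[OF that] by blast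
  then show ?thesis
    using assms by (auto simp: mem_closed_nbhd_iff)
qed

lemma dvd_ord_comparable_if_generate_subset_closed_nbhd:
  assumes x: "x \<in> carrier G" and y: "y \<in> carrier G"
    and sub: "generate G {x} \<subseteq> closed_nbhd G y" and e: "e dvd ord x"
  shows "e dvd ord y \<or> ord y dvd e"
proof -
  have "x [^] (ord x div e) \<in> closed_nbhd G y"
    using sub x by (auto simp: pow_mem_generate_singleton)
  then show ?thesis
    using ord_dvd_or_dvd_if_mem_closed_nbhd[OF y] ord_pow_ord_div[OF x e] by metis
qed

lemma exists_root_in_generate:
  assumes x: "x \<in> carrier G" and y: "y \<in> generate G {x}" and m: "m dvd ord x div ord y"
  shows "\<exists>x'\<in>generate G {x}. x' [^] m = y"
proof -
  obtain j :: nat where j: "0 < j" "y = x [^] j"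
    using x y by (auto simp: mem_generate_singleton_iff_pos)
  have "ord y = ord x div gcd (ord x) j"
    using x j by (simp add: ord_pow_gen)
  then have "ord x div ord y = gcd (ord x) j"
    using ord_pos[OF x] by (simp add: div_div_eq_right)
  then obtain j' where "j = m * j'"
    using m by (metis dvd_trans gcd_dvd2 dvdE)
  then have "(x [^] j') [^] m = y"
    using x j by (simp add: nat_pow_pow mult.commute)
  then show ?thesis
    using x pow_mem_generate_singleton by blast
qed

lemma closed_nbhd_eq_prime_rootE:
  assumes x: "x \<in> carrier G" and y: "y \<in> generate G {x}"
    and proper: "generate G {y} \<noteq> generate G {x}"
    and N: "closed_nbhd G x = closed_nbhd G y" and "y \<noteq> \<one>"
  obtains p x' where "Factorial_Ring.prime p"
    "\<And>q. Factorial_Ring.prime q \<Longrightarrow> q dvd ord x \<Longrightarrow> q = p"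
    "x' \<in> generate G {x}" "x' [^] p = y" "p * ord y \<le> ord x"
proof -
  have yc: "y \<in> carrier G"
    using x y generate_singleton_subset_carrier by blast
  then have "1 < ord y"
    using \<open>y \<noteq> \<one>\<close> ord_eq_1 ord_pos by fastforce
  have dvd: "ord y dvd ord x"
    using ord_dvd_if_mem_generate[OF x y] .
  moreover have "ord y \<noteq> ord x"
    using generate_singleton_eq_if_ord_eq[OF x y] proper by blast
  ultimately obtain c where c: "ord x = ord y * c" "c \<noteq> 1"
    by (metis dvdE mult.right_neutral)
  then obtain p where p: "Factorial_Ring.prime p" "p dvd c"
    using prime_factor_nat by blast
  have "p * ord y dvd ord x"
    using c p by (simp add: mult.commute mult_dvd_mono)
  have "generate G {x} \<subseteq> closed_nbhd G x"
    using x generate_singleton_subset_carrier[OF x] by (auto simp: mem_closed_nbhd_iff)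
  then have "\<And>e. e dvd ord x \<Longrightarrow> e dvd ord y \<or> ord y dvd e"
    using N x yc dvd_ord_comparable_if_generate_subset_closed_nbhd by blast
  then have "\<And>q. Factorial_Ring.prime q \<Longrightarrow> q dvd ord x \<Longrightarrow> q = p"
    using prime_divisor_unique_if_divisors_comparable \<open>1 < ord y\<close> p(1) \<open>p * ord y dvd ord x\<close>
    by blast
  moreover obtain x' where "x' \<in> generate G {x}" "x' [^] p = y"
    using exists_root_in_generate[OF x y] p(2) c(1) \<open>1 < ord y\<close> by auto
  moreover have "p * ord y \<le> ord x"
    using \<open>p * ord y dvd ord x\<close> ord_pos[OF x] by (simp add: dvd_imp_le)
  ultimately show ?thesis
    using that p(1) by blast
qed

end

context finite_comm_group
begin

lemma closed_nbhd_ne_if_prime_order_not_dvd: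
  assumes x: "x \<in> carrier G" and y: "y \<in> generate G {x}"
    and proper: "generate G {y} \<noteq> generate G {x}"
    and u: "u \<in> carrier G" and r: "Factorial_Ring.prime r" "ord u = r" "\<not> r dvd ord x"
  shows "closed_nbhd G x \<noteq> closed_nbhd G y"
proof -
  define z where "z = y \<otimes> u"
  have yc: "y \<in> carrier G"
    using x y generate_singleton_subset_carrier by blast
  have zc: "z \<in> carrier G"
    using yc u z_def by simp
  have "u [^] r = \<one>"
    using u r(2) pow_ord_eq_1 by blast
  then have zr: "z [^] r = y [^] r"
    using yc u by (simp add: z_def nat_pow_distrib)
  have "\<not> r dvd ord y"
    using r(3) ord_dvd_if_mem_generate[OF x y] dvd_trans by blast
  then have y_r: "generate G {y [^] r} = generate G {y}"
    using yc r(1) by (simp add: generate_pow_eq_if_coprime prime_imp_coprime)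
  have "generate G {y [^] r} \<subseteq> generate G {z}"
    using zc zr by (metis generate_singleton_mono pow_mem_generate_singleton)
  then have "y \<in> generate G {z}"
    using y_r generate.incl[of y "{y}" G] by auto
  then have "z \<in> closed_nbhd G y"
    using yc zc by (simp add: mem_closed_nbhd_iff)
  moreover have "z \<notin> generate G {x}"
  proof
    assume "z \<in> generate G {x}"
    then have "inv y \<otimes> z \<in> generate G {x}"
      using x y by (simp add: generate_is_subgroup subgroup.m_closed subgroup.m_inv_closed)
    moreover have "inv y \<otimes> z = u"
      using yc u by (simp add: z_def m_assoc[symmetric])
    ultimately show False
      using r ord_dvd_if_mem_generate[OF x] by auto
  qed
  moreover have "x \<notin> generate G {z}"
  proof
    assume "x \<in> generate G {z}"
    then obtain m :: nat where "x = z [^] m"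
      using zc by (auto simp: mem_generate_singleton_iff)
    then have "x [^] r = (z [^] r) [^] m"
      using zc by (simp add: nat_pow_pow mult.commute)
    then have "x [^] r = (y [^] r) [^] m"
      using zr by simp
    then have "x [^] r \<in> generate G {y}"
      using yc by (simp add: nat_pow_pow pow_mem_generate_singleton)
    moreover have "generate G {x [^] r} = generate G {x}"
      using x r by (simp add: generate_pow_eq_if_coprime prime_imp_coprime)
    ultimately have "generate G {x} \<subseteq> generate G {y}"
      using yc generate_singleton_mono by metis
    then show False
      using proper generate_singleton_mono[OF x y] by blast
  qed
  ultimately show ?thesis
    using x by (auto simp: mem_closed_nbhd_iff)
qed

lemma closed_nbhd_ne_if_torsion_outside_generate:
  assumes x: "x \<in> carrier G" and x': "x' \<in> generate G {x}"
    and "0 < p" and root: "x' [^] p = y" and le: "p * ord y \<le> ord x"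
    and t: "t \<in> carrier G" "t [^] p = \<one>" "t \<notin> generate G {x}"
  shows "closed_nbhd G x \<noteq> closed_nbhd G y"
proof -
  define z where "z = x' \<otimes> t"
  have x'c: "x' \<in> carrier G"
    using x x' generate_singleton_subset_carrier by blast
  have yc: "y \<in> carrier G"
    using x'c root by blast
  have zc: "z \<in> carrier G"
    using x'c t z_def by simp
  have zp: "z [^] p = y"
    using x'c t root[symmetric] by (simp add: z_def nat_pow_distrib)
  then have "y \<in> generate G {z}"
    using zc pow_mem_generate_singleton by blast
  then have "z \<in> closed_nbhd G y"
    using yc zc by (simp add: mem_closed_nbhd_iff)
  moreover have "z \<notin> generate G {x}"
  proof
    assume "z \<in> generate G {x}"
    then have "inv x' \<otimes> z \<in> generate G {x}"
      using x x' by (simp add: generate_is_subgroup subgroup.m_closed subgroup.m_inv_closed)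
    moreover have "inv x' \<otimes> z = t"
      using x'c t by (simp add: z_def m_assoc[symmetric])
    ultimately show False
      using t by simp
  qed
  moreover have "x \<notin> generate G {z}"
  proof
    assume xz: "x \<in> generate G {z}"
    have "z [^] (p * ord y) = \<one>"
      using zc zp yc by (simp add: nat_pow_pow[symmetric])
    then have "ord z \<le> p * ord y"
      using zc yc \<open>0 < p\<close> by (simp add: pow_eq_id dvd_imp_le ord_pos)
    then have "card (generate G {z}) \<le> card (generate G {x})"
      using x zc le by (simp add: card_generate_singleton)
    then have "generate G {x} = generate G {z}"
      using card_seteq finite_subset[OF generate_singleton_subset_carrier[OF zc] finite_carrier]
        generate_singleton_mono[OF zc xz] by blast
    then show False
      using \<open>z \<notin> generate G {x}\<close> generate.incl[of z "{z}" G] by simp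
  qed
  ultimately show ?thesis
    using x by (auto simp: mem_closed_nbhd_iff)
qed

lemma mem_closed_nbhd_if_pow_mem:
  fixes p :: nat
  assumes p: "Factorial_Ring.prime p" and x: "x \<in> carrier G"
    and ord_x: "\<And>q. Factorial_Ring.prime q \<Longrightarrow> q dvd ord x \<Longrightarrow> q = p"
    and torsion: "\<And>t. t \<in> carrier G \<Longrightarrow> t [^] p = \<one> \<Longrightarrow> t \<in> generate G {x}"
    and v: "v \<in> carrier G" and v_p: "v [^] p \<in> closed_nbhd G x"
  shows "v \<in> closed_nbhd G x"
proof -
  have sub: "generate G {v [^] p} \<subseteq> generate G {v}"
    using v by (simp add: generate_singleton_mono pow_mem_generate_singleton)
  have "v \<in> generate G {x} \<or> x \<in> generate G {v}"
  proof (cases "v [^] p \<in> generate G {x}")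
    case True
    then obtain k :: nat where k: "v [^] p = x [^] k"
      using x by (auto simp: mem_generate_singleton_iff)
    show ?thesis
    proof (cases "p dvd k")
      case True
      then obtain k' where k': "k = p * k'" ..
      define t where "t = v \<otimes> inv (x [^] k')"
      have "t [^] p = v [^] p \<otimes> inv ((x [^] k') [^] p)"
        using v x by (simp add: t_def nat_pow_distrib nat_pow_inv)
      also have "\<dots> = \<one>"
        using x k k' by (simp add: nat_pow_pow mult.commute)
      finally have "t \<in> generate G {x}"
        using torsion v x t_def by simp
      then have "t \<otimes> x [^] k' \<in> generate G {x}"
        using x by (simp add: generate_is_subgroup subgroup.m_closed pow_mem_generate_singleton)
      moreover have "t \<otimes> x [^] k' = v"
        using v x by (simp add: t_def m_assoc)
      ultimately show ?thesis
        by simp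
    next
      case False
      then have "coprime k (ord x)"
        using coprime_if_unique_prime_divisor[of "ord x" p k] ord_x by blast
      then have "generate G {x [^] k} = generate G {x}"
        using x by (simp add: generate_pow_eq_if_coprime)
      then show ?thesis
        using k sub generate.incl[of x "{x}" G] by auto
    qed
  next
    case False
    then show ?thesis
      using v_p x sub by (auto simp: mem_closed_nbhd_iff)
  qed
  then show ?thesis
    using x v by (simp add: mem_closed_nbhd_iff)
qed

lemma closed_nbhd_eq_carrier_if_p_group:
  fixes p :: nat
  assumes p: "Factorial_Ring.prime p" and x: "x \<in> carrier G"
    and p_group: "\<And>g q. g \<in> carrier G \<Longrightarrow> Factorial_Ring.prime q \<Longrightarrow> q dvd ord g \<Longrightarrow> q = p"
    and torsion: "\<And>t. t \<in> carrier G \<Longrightarrow> t [^] p = \<one> \<Longrightarrow> t \<in> generate G {x}"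
  shows "closed_nbhd G x = carrier G"
proof -
  have "v \<in> closed_nbhd G x" if "v \<in> carrier G" for v
    using that
  proof (induction "ord v" arbitrary: v rule: less_induct)
    case less
    show ?case
    proof (cases "v = \<one>")
      case True
      then show ?thesis
        using x by (simp add: mem_closed_nbhd_iff generate.one)
    next
      case False
      then have "ord v \<noteq> 1"
        using less.prems ord_eq_1 by blast
      then obtain q where q: "Factorial_Ring.prime q" "q dvd ord v"
        using prime_factor_nat by blast
      then have "p dvd ord v"
        using p_group[OF less.prems q] by simp
      then have "ord (v [^] p) < ord v"
        using less.prems p ord_pos[OF less.prems] prime_gt_1_nat
        by (simp add: ord_pow div_less_dividend)
      then have "v [^] p \<in> closed_nbhd G x"
        using less by simp
      then show ?thesis
        using mem_closed_nbhd_if_pow_mem[OF p x _ torsion less.prems] p_group[OF x] by blast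
    qed
  qed
  then show ?thesis
    using mem_closed_nbhd_iff[OF x] by (intro equalityI subsetI) simp_all
qed

lemma closed_nbhd_ne_if_proper_generate:
  assumes x: "x \<in> carrier G" and y: "y \<in> generate G {x}"
    and proper: "generate G {y} \<noteq> generate G {x}"
    and not_dominating: "closed_nbhd G x \<noteq> carrier G"
  shows "closed_nbhd G x \<noteq> closed_nbhd G y"
proof
  assume N: "closed_nbhd G x = closed_nbhd G y"
  then have "y \<noteq> \<one>"
    using not_dominating closed_nbhd_one by auto
  then obtain p x' where p: "Factorial_Ring.prime p"
    and unique: "\<And>q. Factorial_Ring.prime q \<Longrightarrow> q dvd ord x \<Longrightarrow> q = p"
    and x': "x' \<in> generate G {x}" "x' [^] p = y" and "p * ord y \<le> ord x"
    using closed_nbhd_eq_prime_rootE[OF x y proper N] by blast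
  show False
  proof (cases "\<exists>u\<in>carrier G. \<exists>r. Factorial_Ring.prime r \<and> ord u = r \<and> \<not> r dvd ord x")
    case True
    then obtain u r where "u \<in> carrier G" "Factorial_Ring.prime r" "ord u = r" "\<not> r dvd ord x"
      by blast
    then show False
      using closed_nbhd_ne_if_prime_order_not_dvd[OF x y proper] N by blast
  next
    case no_prime_order: False
    have p_group: "q = p" if "g \<in> carrier G" "Factorial_Ring.prime q" "q dvd ord g" for g q
    proof -
      have "g [^] (ord g div q) \<in> carrier G" "ord (g [^] (ord g div q)) = q"
        using that ord_pow_ord_div by simp_all
      then have "q dvd ord x"
        using no_prime_order that(2) by blast
      then show "q = p"
        by (rule unique[OF that(2)])
    qed
    show False
    proof (cases "\<exists>t\<in>carrier G. t [^] p = \<one> \<and> t \<notin> generate G {x}")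
      case True
      then obtain t where "t \<in> carrier G" "t [^] p = \<one>" "t \<notin> generate G {x}"
        by blast
      then show False
        using closed_nbhd_ne_if_torsion_outside_generate[OF x x'(1) _ x'(2) \<open>p * ord y \<le> ord x\<close>]
          N prime_gt_0_nat[OF p] by blast
    next
      case False
      then have torsion: "\<And>t. t \<in> carrier G \<Longrightarrow> t [^] p = \<one> \<Longrightarrow> t \<in> generate G {x}"
        by blast
      show False
        using not_dominating closed_nbhd_eq_carrier_if_p_group[OF p x p_group torsion] by (rule notE)
    qed
  qed
qed

lemma closed_nbhd_eq_iff_generate_eq:
  assumes x: "x \<in> carrier G" and y: "y \<in> carrier G"
    and not_dominating: "closed_nbhd G x \<noteq> carrier G"
  shows "closed_nbhd G x = closed_nbhd G y \<longleftrightarrow> generate G {x} = generate G {y}"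
proof
  assume N: "closed_nbhd G x = closed_nbhd G y"
  then have "y \<in> closed_nbhd G x"
    by (simp add: closed_nbhd_def)
  then have "y \<in> generate G {x} \<or> x \<in> generate G {y}"
    using x by (simp add: mem_closed_nbhd_iff)
  then show "generate G {x} = generate G {y}"
    using closed_nbhd_ne_if_proper_generate[OF x _ _ not_dominating]
      closed_nbhd_ne_if_proper_generate[OF y _ _ not_dominating[unfolded N]] N by metis
qed (simp add: x y closed_nbhd_eq_if_generate_eq)

end

theorem mainTheorem16:
  fixes G (structure) and x y :: 'a
  assumes "comm_group G" and "finite (carrier G)"
    and "x \<in> carrier G" and "y \<in> carrier G"
    and "classN G x \<noteq> setS G"
  shows "relN G x y \<longleftrightarrow> generate G {x} = generate G {y}"
proof -
  interpret finite_comm_group G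
    using assms(1,2)
    by (simp add: finite_comm_group_def finite_group_def finite_group_axioms_def comm_group_def)
  have "closed_nbhd G x \<noteq> carrier G"
    using assms(5) closed_nbhd_one by (auto simp: setS_def classN_def relN_def)
  then show ?thesis
    using assms(3,4) by (simp add: relN_def closed_nbhd_eq_iff_generate_eq)
qed

end
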